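(* For every $n\in\mathcal{N}_{z_q}$, \[ \{\theta(\gamma):\gamma\in\Gamma_{z_q,n}\}=\Bigl\{\arg(x+iy)\ :\ x,y\in\mathbb{R},\ y+ix\in\mathcal{O}_K,\ N(y+ix)=n^2-4\lambda^4,\ 2y\equiv 2n \pmod{q}\Bigr\}, \] where $2y\equiv 2n\pmod q$ means $2y-2n\in q\mathbb{Z}$.
   Context: Let $q\in\{3,4,7,8,11,19,43,67,163\}$ and let $K$ be the imaginary quadratic field of discriminant $-q$ (class number one), with ring of integers $\mathcal{O}_K$ and norm $N$. Let $z_q=\mu+i\lambda$ where $\mu=0$ if $q\in\{4,8\}$, $\mu=1/2$ otherwise, and $\lambda=\sqrt{q}/2$ (so $\mathcal{O}_K=\mathbb{Z}+\mathbb{Z}z_q$). Let $\mathbb{H}$ be the upper half-plane with hyperbolic distance $\rho$, $\cosh\rho(z,w)=1+\frac{|z-w|^2}{2\,\mathrm{Im}(z)\mathrm{Im}(w)}$, and $\Gamma=\mathrm{PSL}(2,\mathbb{Z})$ acting by Möbius transformations. For $\gamma\in\Gamma$ set $\mathcal{R}(\gamma;z_q)=2\lambda^2\cosh\rho(z_q,\gamma z_q)$, $\mathcal{N}_{z_q}=\{\mathcal{R}(\gamma;z_q):\gamma\in\Gamma\}$, and $\Gamma_{z_q,n}=\{\gamma\in\Gamma:\mathcal{R}(\gamma;z_q)=n\}$. For $\gamma z_q\neq z_q$, $\theta(\gamma)\in\mathbb{R}/2\pi\mathbb{Z}$ is the angle that the tangent vector at $z_q$ of the geodesic segment from $z_q$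 to $\gamma z_q$ makes with the positive horizontal direction. *)

theory Defs
  imports "HOL-Analysis.Analysis"
begin

text \<open>The admissible discriminants q (class number one).\<close>
definition admissible_q :: "nat set" where
  "admissible_q = {3, 4, 7, 8, 11, 19, 43, 67, 163}"

definition mu_q :: "nat \<Rightarrow> real" where
  "mu_q q = (if q \<in> {4, 8} then 0 else 1/2)"

definition lambda_q :: "nat \<Rightarrow> real" where
  "lambda_q q = sqrt (real q) / 2"

definition z_q :: "nat \<Rightarrow> complex" where
  "z_q q = Complex (mu_q q) (lambda_q q)"

definition O_K :: "nat \<Rightarrow> complex set" where
  "O_K q = {of_int a + of_int b * z_q q | a b :: int. True}"

definition normK :: "complex \<Rightarrow> real" where
  "normK \<alpha> = (cmod \<alpha>)\<^sup>2"

text \<open>Gamma = PSL(2,Z), realised as the group of Moebius maps it induces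
  (PSL(2,Z) acts faithfully on the upper half-plane).\<close>
definition moebius :: "int \<Rightarrow> int \<Rightarrow> int \<Rightarrow> int \<Rightarrow> complex \<Rightarrow> complex" where
  "moebius a b c d z = (of_int a * z + of_int b) / (of_int c * z + of_int d)"

definition Gamma :: "(complex \<Rightarrow> complex) set" where
  "Gamma = {moebius a b c d | a b c d :: int. a * d - b * c = 1}"

definition cosh_rho :: "complex \<Rightarrow> complex \<Rightarrow> real" where
  "cosh_rho z w = 1 + (cmod (z - w))\<^sup>2 / (2 * Im z * Im w)"

definition R_fun :: "nat \<Rightarrow> (complex \<Rightarrow> complex) \<Rightarrow> real" where
  "R_fun q \<gamma> = 2 * (lambda_q q)\<^sup>2 * cosh_rho (z_q q) (\<gamma> (z_q q))"

definition N_set :: "nat \<Rightarrow> real set" where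
  "N_set q = {R_fun q \<gamma> | \<gamma>. \<gamma> \<in> Gamma}"

definition Gamma_n :: "nat \<Rightarrow> real \<Rightarrow> (complex \<Rightarrow> complex) set" where
  "Gamma_n q n = {\<gamma> \<in> Gamma. R_fun q \<gamma> = n}"

text \<open>Geodesic segment from z to w in the upper half-plane: the isometry
  u \<mapsto> (u - z)/(u - cnj z) onto the unit disc sends z to 0, where the geodesics
  through 0 are the radii; pull back the radius t \<mapsto> t * phi(w), t in [0,1].\<close>
definition disc_map :: "complex \<Rightarrow> complex \<Rightarrow> complex" where
  "disc_map z u = (u - z) / (u - cnj z)"

definition disc_map_inv :: "complex \<Rightarrow> complex \<Rightarrow> complex" where
  "disc_map_inv z v = (z - cnj z * v) / (1 - v)"

definition geodesic_seg :: "complex \<Rightarrow> complex \<Rightarrow> real \<Rightarrow> complex" where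
  "geodesic_seg z w t = disc_map_inv z (complex_of_real t * disc_map z w)"

definition theta_angle :: "complex \<Rightarrow> complex \<Rightarrow> real" where
  "theta_angle z w = Arg (vector_derivative (geodesic_seg z w) (at 0 within {0..1}))"

end

theory Submission
  imports Defs
begin

text \<open>The Gamma-orbit of z_q is exactly the set of roots w in the upper half-plane of the
  positive definite integral forms A X^2 + B X + C of discriminant -q: one inclusion is the
  action of Gamma on forms, the other is reduction theory, which works because class number one
  leaves the principal form X^2 - t X + m as the only reduced form. For such a root w and
  Q = A z_q^2 + B z_q + C one has 2 lambda^2 cosh rho(z_q, w) = A |z_q|^2 + B Re z_q + C =: R,
  the geodesic from z_q to w leaves z_q in the direction of i Q, |Q|^2 = R^2 - 4 lambda^4 and
  2 Re Q - 2 R = - A q. Hence y + i x = cnj Q runs through the elements of O_K = Z + Z z_q with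
  the stated norm and congruence, and A is recovered from the congruence.\<close>

lemma vector_derivative_geodesic_seg:
  "vector_derivative (geodesic_seg z w) (at 0 within {0..1}) = disc_map z w * (z - cnj z)"
proof -
  let ?p = "disc_map z w"
  have radius: "((\<lambda>t. complex_of_real t * ?p) has_vector_derivative ?p) (at 0)"
  proof -
    have "bounded_linear (\<lambda>x. complex_of_real x * ?p)"
      by (rule bounded_linear_compose[OF bounded_linear_mult_left bounded_linear_of_real])
    then show ?thesis
      by (auto simp: has_vector_derivative_def has_derivative_def scaleR_conv_of_real algebra_simps)
  qed
  have inv: "(disc_map_inv z has_field_derivative (z - cnj z)) (at (complex_of_real 0 * ?p))"
    unfolding disc_map_inv_def by (auto intro!: derivative_eq_intros)
  have "(geodesic_seg z w has_vector_derivative ?p * (z - cnj z)) (at 0)"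
    using field_vector_diff_chain_at[OF radius inv] by (simp add: geodesic_seg_def[abs_def] o_def)
  then show ?thesis
    by (metis vector_derivative_at_within_ivl order_refl zero_le_one zero_less_one)
qed

lemma theta_angle_eq_Arg:
  assumes "Im z > 0" "Im w > 0"
  shows "theta_angle z w = Arg (\<i> * ((w - z) * (cnj w - z)))"
proof -
  have "Im (w - cnj z) > 0" using assms by simp
  then have ne: "w - cnj z \<noteq> 0" by auto
  define r where "r = 2 * Im z / (cmod (w - cnj z))\<^sup>2"
  have r: "r > 0" unfolding r_def using assms ne by simp
  have zc: "z - cnj z = 2 * \<i> * of_real (Im z)" by (simp add: complex_eq_iff)
  have "disc_map z w * (z - cnj z) = of_real r * (\<i> * ((w - z) * cnj (w - cnj z)))"
    unfolding disc_map_def r_def zc using ne by (subst complex_div_cnj) (simp add: field_simps)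
  then show ?thesis
    unfolding theta_angle_def vector_derivative_geodesic_seg by (simp add: Arg_times_of_real[OF r])
qed

text \<open>For B^2 < 4 A C with A > 0, upper_root A B C is the root of A X^2 + B X + C in the upper
  half-plane; form_R A B C z is the paper's R(gamma; z) when gamma z is that root
  (lemma cosh_rho_upper_root).\<close>

definition upper_root :: "real \<Rightarrow> real \<Rightarrow> real \<Rightarrow> complex" where
  "upper_root A B C = Complex (- B / (2 * A)) (sqrt (4 * A * C - B\<^sup>2) / (2 * A))"

definition form_eval :: "real \<Rightarrow> real \<Rightarrow> real \<Rightarrow> complex \<Rightarrow> complex" where
  "form_eval A B C z = of_real A * z\<^sup>2 + of_real B * z + of_real C"

definition form_R :: "real \<Rightarrow> real \<Rightarrow> real \<Rightarrow> complex \<Rightarrow> real" where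
  "form_R A B C z = A * (cmod z)\<^sup>2 + B * Re z + C"

lemma Im_upper_root_pos: "A > 0 \<Longrightarrow> B\<^sup>2 < 4 * A * C \<Longrightarrow> Im (upper_root A B C) > 0"
  by (simp add: upper_root_def)

lemma form_eval_factor:
  assumes "A \<noteq> 0" "B\<^sup>2 \<le> 4 * A * C"
  shows "form_eval A B C z = of_real A * ((upper_root A B C - z) * (cnj (upper_root A B C) - z))"
proof -
  define s where "s = sqrt (4 * A * C - B\<^sup>2)"
  have "s\<^sup>2 = 4 * A * C - B\<^sup>2" unfolding s_def using assms(2) by simp
  then have C: "C = (s\<^sup>2 + B\<^sup>2) / (4 * A)" using assms(1) by (simp add: field_simps)
  show ?thesis
    unfolding form_eval_def upper_root_def s_def[symmetric] C using assms(1)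
    by (simp add: complex_eq_iff power2_eq_square field_simps)
qed

lemma cmod_form_eval_sq:
  "(cmod (form_eval A B C z))\<^sup>2 = (form_R A B C z)\<^sup>2 - (Im z)\<^sup>2 * (4 * A * C - B\<^sup>2)"
  unfolding form_eval_def form_R_def cmod_power2
  by (simp add: power2_eq_square algebra_simps)

lemma Re_form_eval: "Re (form_eval A B C z) = form_R A B C z - 2 * A * (Im z)\<^sup>2"
  unfolding form_eval_def form_R_def cmod_power2 by (simp add: power2_eq_square algebra_simps)

lemma form_R_times_leading:
  "4 * A * form_R A B C z = (2 * A * Re z + B)\<^sup>2 + 4 * A\<^sup>2 * (Im z)\<^sup>2 + (4 * A * C - B\<^sup>2)"
  unfolding form_R_def cmod_power2 by (simp add: power2_eq_square algebra_simps)

lemma form_R_pos_iff: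
  assumes "B\<^sup>2 < 4 * A * C"
  shows "form_R A B C z > 0 \<longleftrightarrow> A > 0"
proof -
  have "4 * A * form_R A B C z > 0"
    unfolding form_R_times_leading using assms by (simp add: add_nonneg_pos)
  then show ?thesis by (auto simp add: zero_less_mult_iff)
qed

lemma upper_root_of_disc:
  assumes "A > 0" "Im z > 0" "4 * A * C - B\<^sup>2 = 4 * (Im z)\<^sup>2"
  shows "upper_root A B C = Complex (- B / (2 * A)) (Im z / A)"
proof -
  have "sqrt (4 * A * C - B\<^sup>2) = 2 * Im z"
    unfolding assms(3) using assms(2) by (simp add: real_sqrt_mult)
  then show ?thesis unfolding upper_root_def using assms(1) by simp
qed

lemma cosh_rho_upper_root:
  assumes "A > 0" "Im z > 0" and disc: "4 * A * C - B\<^sup>2 = 4 * (Im z)\<^sup>2"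
  shows "2 * (Im z)\<^sup>2 * cosh_rho z (upper_root A B C) = form_R A B C z"
proof -
  have C: "C = (4 * (Im z)\<^sup>2 + B\<^sup>2) / (4 * A)" using disc assms(1) by (simp add: field_simps)
  show ?thesis
    unfolding cosh_rho_def form_R_def upper_root_of_disc[OF assms] cmod_power2
    unfolding C using assms(1,2) by (simp add: power2_eq_square field_simps)
qed

lemma theta_angle_upper_root:
  assumes "A > 0" "B\<^sup>2 < 4 * A * C" "Im z > 0"
  shows "theta_angle z (upper_root A B C) = Arg (\<i> * form_eval A B C z)"
proof -
  let ?r = "upper_root A B C"
  have "\<i> * form_eval A B C z = of_real A * (\<i> * ((?r - z) * (cnj ?r - z)))"
    using form_eval_factor[of A B C z] assms(1,2) by simp
  then show ?thesis
    unfolding theta_angle_eq_Arg[OF assms(3) Im_upper_root_pos[OF assms(1,2)]]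
    by (simp only: Arg_times_of_real[OF assms(1)])
qed

lemma form_eval_eq_0_iff:
  assumes "A > 0" "B\<^sup>2 < 4 * A * C" "Im z > 0"
  shows "form_eval A B C z = 0 \<longleftrightarrow> z = upper_root A B C"
proof -
  let ?r = "upper_root A B C"
  have "Im (cnj ?r - z) < 0" using Im_upper_root_pos[OF assms(1,2)] assms(3) by simp
  then have "cnj ?r - z \<noteq> 0" by auto
  then show ?thesis using form_eval_factor[of A B C z] assms(1,2) by auto
qed

lemma Im_moebius:
  assumes "a * d - b * c = 1"
  shows "Im (moebius a b c d u) = Im u / (cmod (of_int c * u + of_int d))\<^sup>2"
proof -
  have det: "real_of_int a * of_int d - of_int b * of_int c = 1"
    using arg_cong[OF assms, of real_of_int] by simp
  have "Im (of_int a * u + of_int b) * Re (of_int c * u + of_int d)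
      - Re (of_int a * u + of_int b) * Im (of_int c * u + of_int d) = Im u"
    using det by (simp add: algebra_simps)
  then show ?thesis unfolding moebius_def Im_divide' by simp
qed

lemma moebius_denom_nonzero:
  assumes "Im u \<noteq> 0" "a * d - b * c = 1"
  shows "of_int c * u + of_int d \<noteq> 0"
proof
  assume zero: "of_int c * u + of_int d = 0"
  have "of_int c * Im u = 0" using arg_cong[OF zero, of Im] by simp
  then have "c = 0" using assms(1) by simp
  moreover from this have "d = 0" using zero by simp
  ultimately show False using assms(2) by simp
qed

lemma Im_moebius_pos:
  assumes "Im u > 0" "a * d - b * c = 1"
  shows "Im (moebius a b c d u) > 0"
  using moebius_denom_nonzero[of u a d b c] assms by (simp add: Im_moebius)

lemma moebius_moebius:
  assumes "Im u \<noteq> 0" "a * d - b * c = 1" "a' * d' - b' * c' = 1"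
  shows "moebius a b c d (moebius a' b' c' d' u)
       = moebius (a * a' + b * c') (a * b' + b * d') (c * a' + d * c') (c * b' + d * d') u"
proof -
  have inner: "of_int c' * u + of_int d' \<noteq> 0"
    using moebius_denom_nonzero[OF assms(1,3)] .
  have "Im (moebius a' b' c' d' u) \<noteq> 0"
    using inner assms(1) by (simp add: Im_moebius[OF assms(3)])
  then have outer: "of_int c * moebius a' b' c' d' u + of_int d \<noteq> 0"
    using moebius_denom_nonzero[OF _ assms(2)] by blast
  have "moebius a b c d (moebius a' b' c' d' u)
      = (of_int a * (of_int a' * u + of_int b') + of_int b * (of_int c' * u + of_int d'))
      / (of_int c * (of_int a' * u + of_int b') + of_int d * (of_int c' * u + of_int d'))"
    using inner outer unfolding moebius_def by (simp add: divide_simps)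
  then show ?thesis unfolding moebius_def by (simp add: algebra_simps)
qed

lemma form_eval_moebius:
  fixes a b c d :: int and A B C :: real
  assumes det: "a * d - b * c = 1" and nz: "of_int c * u + of_int d \<noteq> 0"
  shows "form_eval (A * d\<^sup>2 - B * c * d + C * c\<^sup>2) (- 2 * A * b * d + B * (a * d + b * c) - 2 * C * a * c)
           (A * b\<^sup>2 - B * a * b + C * a\<^sup>2) (moebius a b c d u)
       = form_eval A B C u / (of_int c * u + of_int d)\<^sup>2"
proof -
  have detc: "complex_of_int a * of_int d - of_int b * of_int c = 1"
    using arg_cong[OF det, of complex_of_int] by simp
  show ?thesis
    unfolding form_eval_def moebius_def using nz
    by (simp add: divide_simps power2_eq_square) (use detc in algebra)
qed

lemma of_int_disc_less:
  fixes A B C :: int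
  shows "B\<^sup>2 < 4 * A * C \<Longrightarrow> (real_of_int B)\<^sup>2 < 4 * of_int A * of_int C"
  by (metis of_int_less_iff of_int_mult of_int_numeral of_int_power)

lemma moebius_upper_root:
  fixes a b c d A B C :: int
  assumes det: "a * d - b * c = 1" and A: "A > 0" and disc: "B\<^sup>2 < 4 * A * C"
  defines "A' \<equiv> A * d\<^sup>2 - B * c * d + C * c\<^sup>2"
    and "B' \<equiv> - 2 * A * b * d + B * (a * d + b * c) - 2 * C * a * c"
    and "C' \<equiv> A * b\<^sup>2 - B * a * b + C * a\<^sup>2"
  shows "A' > 0" and "B'\<^sup>2 - 4 * A' * C' = B\<^sup>2 - 4 * A * C"
    and "moebius a b c d (upper_root A B C) = upper_root A' B' C'"
proof -
  show disc': "B'\<^sup>2 - 4 * A' * C' = B\<^sup>2 - 4 * A * C"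
    unfolding A'_def B'_def C'_def using det by algebra
  have "4 * A * A' = (2 * A * d - B * c)\<^sup>2 + (4 * A * C - B\<^sup>2) * c\<^sup>2"
    unfolding A'_def by (simp add: power2_eq_square algebra_simps)
  moreover have "(2 * A * d - B * c)\<^sup>2 + (4 * A * C - B\<^sup>2) * c\<^sup>2 > 0"
  proof (cases "c = 0")
    case True
    then have "d \<noteq> 0" using det by auto
    with True A show ?thesis by simp
  next
    case False
    then show ?thesis using disc by (simp add: add_nonneg_pos)
  qed
  ultimately have "4 * A * A' > 0" by simp
  then show A': "A' > 0" using A by (simp add: zero_less_mult_iff)
  have A_real: "real_of_int A > 0" using A by simp
  have disc_real: "(real_of_int B)\<^sup>2 < 4 * of_int A * of_int C"
    using disc by (rule of_int_disc_less)
  let ?u = "upper_root A B C"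
  have u: "Im ?u > 0" using Im_upper_root_pos[OF A_real disc_real] .
  have nz: "of_int c * ?u + of_int d \<noteq> 0" using moebius_denom_nonzero[of ?u a d b c] u det by simp
  have "form_eval A' B' C' (moebius a b c d ?u) = form_eval A B C ?u / (of_int c * ?u + of_int d)\<^sup>2"
    unfolding A'_def B'_def C'_def using form_eval_moebius[OF det nz] by simp
  also have "\<dots> = 0" using form_eval_eq_0_iff[OF A_real disc_real u] by simp
  finally have "form_eval A' B' C' (moebius a b c d ?u) = 0" .
  moreover have "Im (moebius a b c d ?u) > 0" using Im_moebius_pos[OF u det] .
  moreover have "B'\<^sup>2 < 4 * A' * C'" using disc disc' by linarith
  then have "(real_of_int B')\<^sup>2 < 4 * of_int A' * of_int C'"
    by (rule of_int_disc_less)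
  ultimately show "moebius a b c d ?u = upper_root A' B' C'"
    using form_eval_eq_0_iff[of A' B' C'] A' by simp
qed

lemma principal_root:
  fixes t m :: int
  assumes "t\<^sup>2 < 4 * m"
  defines "z \<equiv> upper_root 1 (- t) m"
  shows "Re z = t / 2" and "4 * (Im z)\<^sup>2 = 4 * m - t\<^sup>2" and "Im z > 0"
    and "cnj z = of_int t - z" and "z\<^sup>2 = of_int t * z - of_int m"
proof -
  have D: "4 * real_of_int m - (of_int t)\<^sup>2 > 0"
    using of_int_disc_less[of t 1 m] assms(1) by simp
  show re: "Re z = t / 2" unfolding z_def upper_root_def by simp
  show im: "4 * (Im z)\<^sup>2 = 4 * m - t\<^sup>2"
    unfolding z_def upper_root_def using D by (simp add: power_divide)
  show "Im z > 0" unfolding z_def upper_root_def using D by simp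
  show "cnj z = of_int t - z" using re by (simp add: complex_eq_iff)
  have "real_of_int t = 2 * Re z" using re by simp
  then show "z\<^sup>2 = of_int t * z - of_int m"
    using im by (simp add: complex_eq_iff power2_eq_square algebra_simps)
qed

lemma Gamma_orbit_in_upper_roots:
  fixes t m :: int
  assumes "t\<^sup>2 < 4 * m" "\<gamma> \<in> Gamma"
  obtains A B C :: int where "A > 0" "B\<^sup>2 - 4 * A * C = t\<^sup>2 - 4 * m"
    and "\<gamma> (upper_root 1 (- t) m) = upper_root A B C"
proof -
  obtain a b c d where \<gamma>: "\<gamma> = moebius a b c d" and det: "a * d - b * c = 1"
    using assms(2) unfolding Gamma_def by blast
  note action = moebius_upper_root[OF det, of 1 "- t" m]
  show ?thesis using action assms(1) that unfolding \<gamma> by simp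
qed

lemma exists_shift_abs_le:
  fixes A B :: int
  assumes "A > 0"
  shows "\<exists>k. \<bar>B + 2 * A * k\<bar> \<le> A"
proof -
  have "0 \<le> (B + A) mod (2 * A)" "(B + A) mod (2 * A) < 2 * A" using assms by simp_all
  then have "\<bar>B + 2 * A * - ((B + A) div (2 * A))\<bar> \<le> A"
    using div_mult_mod_eq[of "B + A" "2 * A"] by (simp add: algebra_simps abs_le_iff)
  then show ?thesis by blast
qed

text \<open>Reduction: translate B into [-A, A] by X \<mapsto> X + k and invert by X \<mapsto> -1/X, which turns
  (A, B, C) into (C', -B', A); the class-number-one hypothesis forces C' < A, so the leading
  coefficient decreases until the form is X^2 + B X + C, a translate of the principal one.\<close>

lemma upper_root_in_Gamma_orbit:
  fixes t m A B C :: int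
  assumes disc0: "t\<^sup>2 < 4 * m"
    and class_one: "\<And>A B C :: int. 2 \<le> A \<Longrightarrow> \<bar>B\<bar> \<le> A \<Longrightarrow> A \<le> C \<Longrightarrow> B\<^sup>2 - 4 * A * C = t\<^sup>2 - 4 * m \<Longrightarrow> False"
    and "A > 0" "B\<^sup>2 - 4 * A * C = t\<^sup>2 - 4 * m"
  shows "\<exists>\<gamma>\<in>Gamma. \<gamma> (upper_root 1 (- t) m) = upper_root A B C"
  using assms(3,4)
proof (induction "nat A" arbitrary: A B C rule: less_induct)
  case less
  show ?case
  proof (cases "A = 1")
    case True
    have "B\<^sup>2 - t\<^sup>2 = 2 * (2 * (C - m))" using less.prems(2) True by (simp add: algebra_simps)
    then have "even (B\<^sup>2 - t\<^sup>2)" by (metis dvd_triv_left)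
    then have "even (B + t)" by simp
    then obtain j0 where "B + t = 2 * j0" by (rule evenE)
    then obtain j where j: "B = - 2 * j - t" by (intro that[of "- j0"]) simp
    have C: "C = j\<^sup>2 + t * j + m" using less.prems(2) True unfolding j by (simp add: power2_eq_square algebra_simps)
    have "moebius 1 j 0 1 \<in> Gamma" unfolding Gamma_def by force
    moreover have "moebius 1 j 0 1 (upper_root 1 (- t) m) = upper_root A B C"
      using moebius_upper_root[of 1 1 j 0 1 "- t" m] disc0 unfolding True j C by simp
    ultimately show ?thesis by blast
  next
    case False
    then have A2: "A \<ge> 2" using less.prems(1) by simp
    obtain k where k: "\<bar>B + 2 * A * k\<bar> \<le> A" using exists_shift_abs_le[OF less.prems(1)] by blast
    define B' where "B' = B + 2 * A * k"
    define C' where "C' = C + B * k + A * k\<^sup>2"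
    have disc_shift: "B'\<^sup>2 - 4 * A * C' = t\<^sup>2 - 4 * m"
      using less.prems(2) unfolding B'_def C'_def by (simp add: power2_eq_square algebra_simps)
    then have disc': "(- B')\<^sup>2 - 4 * C' * A = t\<^sup>2 - 4 * m" by (simp add: algebra_simps)
    have "\<bar>B'\<bar> \<le> A" using k unfolding B'_def .
    then have "C' < A" using class_one[OF A2 _ _ disc_shift] not_less by blast
    moreover have "C' > 0"
    proof -
      have "4 * C' * A > 0" using disc' disc0 by (smt (verit) zero_le_power2)
      then show ?thesis using less.prems(1) by (simp add: zero_less_mult_iff)
    qed
    ultimately have "nat C' < nat A" "C' > 0" by simp_all
    then obtain \<gamma> where \<gamma>: "\<gamma> \<in> Gamma" and \<gamma>z: "\<gamma> (upper_root 1 (- t) m) = upper_root C' (- B') A"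
      using less.hyps[OF _ _ disc'] by blast
    obtain a b c d where \<gamma>_def: "\<gamma> = moebius a b c d" and det: "a * d - b * c = 1"
      using \<gamma> unfolding Gamma_def by blast
    have "moebius k (-1) 1 0 (upper_root C' (- B') A) = upper_root A B C"
      using moebius_upper_root[of k 0 "-1" 1 C' "- B'" A] \<open>C' > 0\<close> disc' disc0
      unfolding B'_def C'_def by (simp add: power2_eq_square algebra_simps)
    moreover have "moebius k (-1) 1 0 (\<gamma> (upper_root 1 (- t) m))
        = moebius (k * a - c) (k * b - d) a b (upper_root 1 (- t) m)"
      unfolding \<gamma>_def using moebius_moebius[OF _ _ det, of "upper_root 1 (- t) m" k 0 "-1" 1]
        principal_root(3)[OF disc0]
      by simp
    moreover have "moebius (k * a - c) (k * b - d) a b \<in> Gamma"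
      unfolding Gamma_def using det by (force simp: algebra_simps)
    ultimately show ?thesis using \<gamma>z by auto
  qed
qed

lemma angles_of_Gamma_orbit:
  fixes t m :: int and n :: real
  assumes disc0: "t\<^sup>2 < 4 * m"
    and class_one: "\<And>A B C :: int. 2 \<le> A \<Longrightarrow> \<bar>B\<bar> \<le> A \<Longrightarrow> A \<le> C \<Longrightarrow> B\<^sup>2 - 4 * A * C = t\<^sup>2 - 4 * m \<Longrightarrow> False"
  defines "z \<equiv> upper_root 1 (- t) m"
  shows "{theta_angle z (\<gamma> z) | \<gamma>. \<gamma> \<in> Gamma \<and> 2 * (Im z)\<^sup>2 * cosh_rho z (\<gamma> z) = n \<and> \<gamma> z \<noteq> z}
       = {Arg (\<i> * form_eval (of_int A) (of_int B) (of_int C) z) | A B C :: int.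
            A > 0 \<and> B\<^sup>2 - 4 * A * C = t\<^sup>2 - 4 * m \<and> form_R (of_int A) (of_int B) (of_int C) z = n
            \<and> form_eval (of_int A) (of_int B) (of_int C) z \<noteq> 0}"
    (is "?angles = ?forms")
proof -
  note z = principal_root[OF disc0, folded z_def]
  have root: "theta_angle z (upper_root A B C) = Arg (\<i> * form_eval A B C z)
      \<and> 2 * (Im z)\<^sup>2 * cosh_rho z (upper_root A B C) = form_R A B C z
      \<and> (upper_root A B C = z \<longleftrightarrow> form_eval A B C z = 0)"
    if "A > 0" "B\<^sup>2 - 4 * A * C = t\<^sup>2 - 4 * m" for A B C :: int
  proof -
    have A: "real_of_int A > 0" using that(1) by simp
    have disc: "4 * of_int A * of_int C - (real_of_int B)\<^sup>2 = 4 * (Im z)\<^sup>2"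
      unfolding z(2) using arg_cong[OF that(2), of real_of_int] by simp
    moreover have "(Im z)\<^sup>2 > 0" using z(3) by simp
    ultimately have "(real_of_int B)\<^sup>2 < 4 * of_int A * of_int C" by linarith
    then show ?thesis
      using theta_angle_upper_root cosh_rho_upper_root[OF A z(3) disc] form_eval_eq_0_iff A z(3)
      by metis
  qed
  show ?thesis
  proof (intro set_eqI iffI)
    fix \<theta> assume "\<theta> \<in> ?angles"
    then obtain \<gamma> where "\<gamma> \<in> Gamma" "2 * (Im z)\<^sup>2 * cosh_rho z (\<gamma> z) = n" "\<gamma> z \<noteq> z"
      and \<theta>: "\<theta> = theta_angle z (\<gamma> z)" by blast
    moreover obtain A B C :: int where AB: "A > 0" "B\<^sup>2 - 4 * A * C = t\<^sup>2 - 4 * m"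
      and "\<gamma> z = upper_root A B C"
      using Gamma_orbit_in_upper_roots[OF disc0 \<open>\<gamma> \<in> Gamma\<close>] unfolding z_def by blast
    ultimately have "\<theta> = Arg (\<i> * form_eval A B C z)" "form_R A B C z = n" "form_eval A B C z \<noteq> 0"
      using root[OF AB] by auto
    then show "\<theta> \<in> ?forms" using AB by blast
  next
    fix \<theta> assume "\<theta> \<in> ?forms"
    then obtain A B C :: int where AB: "A > 0" "B\<^sup>2 - 4 * A * C = t\<^sup>2 - 4 * m"
      and "form_R A B C z = n" "form_eval A B C z \<noteq> 0" "\<theta> = Arg (\<i> * form_eval A B C z)" by blast
    moreover obtain \<gamma> where \<gamma>: "\<gamma> \<in> Gamma" and "\<gamma> z = upper_root A B C"
      using upper_root_in_Gamma_orbit[OF disc0 _ AB] class_one unfolding z_def by blast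
    ultimately have "\<theta> = theta_angle z (\<gamma> z)" "2 * (Im z)\<^sup>2 * cosh_rho z (\<gamma> z) = n" "\<gamma> z \<noteq> z"
      using root[OF AB] by auto
    then show "\<theta> \<in> ?angles" using \<gamma> by blast
  qed
qed

lemma form_eval_principal_root:
  fixes t m A B C :: int
  assumes "t\<^sup>2 < 4 * m"
  defines "z \<equiv> upper_root 1 (- t) m"
  shows "form_eval (of_int A) (of_int B) (of_int C) z = of_int (C - A * m) + of_int (A * t + B) * z"
  unfolding form_eval_def principal_root(5)[OF assms(1), folded z_def]
  by (simp add: algebra_simps)

lemma conj_form_eval_in_lattice:
  fixes t m A B C :: int and n :: real
  defines "z \<equiv> upper_root 1 (- t) m" and "Q \<equiv> form_eval (of_int A) (of_int B) (of_int C) (upper_root 1 (- t) m)"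
  assumes disc0: "t\<^sup>2 < 4 * m" and disc: "B\<^sup>2 - 4 * A * C = t\<^sup>2 - 4 * m"
    and R: "form_R (of_int A) (of_int B) (of_int C) z = n"
  shows "cnj Q \<in> {of_int a + of_int b * z | a b :: int. True}"
    and "(cmod (cnj Q))\<^sup>2 = n\<^sup>2 - 4 * (Im z) ^ 4"
    and "2 * Re (cnj Q) - 2 * n = of_int (4 * m - t\<^sup>2) * of_int (- A)"
proof -
  note z = principal_root[OF disc0, folded z_def]
  note Q_def = Q_def[folded z_def]
  have "cnj Q = of_int (C - A * m) + of_int (A * t + B) * cnj z"
    unfolding Q_def form_eval_principal_root[OF disc0, folded z_def] by simp
  also have "\<dots> = of_int (C - A * m + (A * t + B) * t) + of_int (- (A * t + B)) * z"
    unfolding z(4) by (simp add: algebra_simps)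
  finally show "cnj Q \<in> {of_int a + of_int b * z | a b :: int. True}" by blast
  have disc_real: "4 * of_int A * of_int C - (real_of_int B)\<^sup>2 = 4 * (Im z)\<^sup>2"
    unfolding z(2) using arg_cong[OF disc, of real_of_int] by simp
  show "(cmod (cnj Q))\<^sup>2 = n\<^sup>2 - 4 * (Im z) ^ 4"
    unfolding complex_mod_cnj Q_def cmod_form_eval_sq R disc_real by (simp add: power2_eq_square power4_eq_xxxx)
  show "2 * Re (cnj Q) - 2 * n = of_int (4 * m - t\<^sup>2) * of_int (- A)"
    unfolding Q_def z(2)[symmetric] by (simp add: Re_form_eval R)
qed

lemma lattice_point_as_form_value:
  fixes t m e f k :: int and n :: real
  defines "z \<equiv> upper_root 1 (- t) m"
  assumes disc0: "t\<^sup>2 < 4 * m" and "n > 0"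
    and \<alpha>: "\<alpha> = of_int e + of_int f * z"
    and norm: "(cmod \<alpha>)\<^sup>2 = n\<^sup>2 - 4 * (Im z) ^ 4"
    and k: "2 * Re \<alpha> - 2 * n = of_int (4 * m - t\<^sup>2) * of_int k"
  obtains A B C :: int where "A > 0" "B\<^sup>2 - 4 * A * C = t\<^sup>2 - 4 * m"
    and "form_R (of_int A) (of_int B) (of_int C) z = n"
    and "form_eval (of_int A) (of_int B) (of_int C) z = cnj \<alpha>"
proof -
  note z = principal_root[OF disc0, folded z_def]
  define A where "A = - k"
  define B where "B = - f - A * t"
  define C where "C = e + f * t + A * m"
  let ?Q = "form_eval (of_int A) (of_int B) (of_int C) z"
  have Q: "?Q = cnj \<alpha>"
    unfolding form_eval_principal_root[OF disc0, folded z_def] \<alpha> A_def B_def C_def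
    by (simp add: z(4) algebra_simps)
  have "Re \<alpha> = form_R (of_int A) (of_int B) (of_int C) z - 2 * of_int A * (Im z)\<^sup>2"
    using Re_form_eval[of "of_int A" "of_int B" "of_int C" z] unfolding Q by simp
  then have R: "form_R (of_int A) (of_int B) (of_int C) z = n"
    using k unfolding z(2)[symmetric] A_def by (simp add: algebra_simps)
  have "(Im z)\<^sup>2 * (4 * of_int A * of_int C - (of_int B)\<^sup>2) = (Im z)\<^sup>2 * (4 * (Im z)\<^sup>2)"
    using cmod_form_eval_sq[of "of_int A" "of_int B" "of_int C" z] norm
    unfolding Q R complex_mod_cnj by (simp add: power2_eq_square power4_eq_xxxx)
  then have disc_real: "4 * of_int A * of_int C - (real_of_int B)\<^sup>2 = 4 * (Im z)\<^sup>2"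
    using z(3) by simp
  then have "real_of_int (B\<^sup>2 - 4 * A * C) = of_int (t\<^sup>2 - 4 * m)"
    unfolding z(2) by simp
  then have disc: "B\<^sup>2 - 4 * A * C = t\<^sup>2 - 4 * m" by (rule of_int_eq_iff[THEN iffD1])
  have "(real_of_int B)\<^sup>2 < 4 * of_int A * of_int C"
    using disc_real zero_less_power[OF z(3), of 2] by linarith
  then have "A > 0" using form_R_pos_iff[of "of_int B" "of_int A" "of_int C" z] R \<open>n > 0\<close> by simp
  then show ?thesis using disc R Q by (rule that)
qed

lemma angles_of_lattice_points:
  fixes t m :: int and n :: real
  defines "z \<equiv> upper_root 1 (- t) m"
  assumes disc0: "t\<^sup>2 < 4 * m" and "n > 0"
  shows "{Arg (Complex x y) | x y :: real.
            Complex x y \<noteq> 0 \<and> Complex y x \<in> {of_int a + of_int b * z | a b :: int. True} \<and>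
            (cmod (Complex y x))\<^sup>2 = n\<^sup>2 - 4 * (Im z) ^ 4 \<and>
            (\<exists>k :: int. 2 * y - 2 * n = of_int (4 * m - t\<^sup>2) * of_int k)}
       = {Arg (\<i> * form_eval (of_int A) (of_int B) (of_int C) z) | A B C :: int.
            A > 0 \<and> B\<^sup>2 - 4 * A * C = t\<^sup>2 - 4 * m \<and> form_R (of_int A) (of_int B) (of_int C) z = n
            \<and> form_eval (of_int A) (of_int B) (of_int C) z \<noteq> 0}"
    (is "?points = ?forms")
proof (intro set_eqI iffI)
  fix \<theta> assume "\<theta> \<in> ?points"
  then obtain x y e f k where \<theta>: "\<theta> = Arg (Complex x y)" and "Complex x y \<noteq> 0"
    and "Complex y x = of_int e + of_int f * z" "(cmod (Complex y x))\<^sup>2 = n\<^sup>2 - 4 * (Im z) ^ 4"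
    and "2 * y - 2 * n = of_int (4 * m - t\<^sup>2) * of_int k" by blast
  moreover have "Re (Complex y x) = y" by simp
  ultimately obtain A B C :: int where AB: "A > 0" "B\<^sup>2 - 4 * A * C = t\<^sup>2 - 4 * m"
    and R: "form_R (of_int A) (of_int B) (of_int C) z = n"
    and Q: "form_eval (of_int A) (of_int B) (of_int C) z = cnj (Complex y x)"
    using lattice_point_as_form_value[OF disc0 \<open>n > 0\<close>, of "Complex y x"] unfolding z_def
    by metis
  have "form_eval (of_int A) (of_int B) (of_int C) z \<noteq> 0"
    unfolding Q using \<open>Complex x y \<noteq> 0\<close> by (auto simp: complex_eq_iff)
  moreover have "\<i> * cnj (Complex y x) = Complex x y" by (simp add: complex_eq_iff)
  then have "\<theta> = Arg (\<i> * form_eval (of_int A) (of_int B) (of_int C) z)" unfolding \<theta> Q by simp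
  ultimately show "\<theta> \<in> ?forms" using AB R by blast
next
  fix \<theta> assume "\<theta> \<in> ?forms"
  then obtain A B C :: int where "A > 0" and disc: "B\<^sup>2 - 4 * A * C = t\<^sup>2 - 4 * m"
    and R: "form_R (of_int A) (of_int B) (of_int C) z = n"
    and "form_eval (of_int A) (of_int B) (of_int C) z \<noteq> 0"
    and \<theta>: "\<theta> = Arg (\<i> * form_eval (of_int A) (of_int B) (of_int C) z)" by blast
  define \<alpha> where "\<alpha> = cnj (form_eval (of_int A) (of_int B) (of_int C) z)"
  note facts = conj_form_eval_in_lattice[OF disc0 disc R[unfolded z_def], folded z_def]
  have "Complex (Im \<alpha>) (Re \<alpha>) = \<i> * cnj \<alpha>" by (simp add: complex_eq_iff)
  then have "\<theta> = Arg (Complex (Im \<alpha>) (Re \<alpha>))" unfolding \<theta> \<alpha>_def by simp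
  moreover have "Complex (Im \<alpha>) (Re \<alpha>) \<noteq> 0" using \<open>form_eval _ _ _ z \<noteq> 0\<close>
    unfolding \<alpha>_def by (auto simp: complex_eq_iff)
  moreover have "Complex (Re \<alpha>) (Im \<alpha>) \<in> {of_int a + of_int b * z | a b :: int. True}"
    "(cmod (Complex (Re \<alpha>) (Im \<alpha>)))\<^sup>2 = n\<^sup>2 - 4 * (Im z) ^ 4"
    "2 * Re \<alpha> - 2 * n = of_int (4 * m - t\<^sup>2) * of_int (- A)"
    unfolding complex_surj \<alpha>_def by (fact facts)+
  ultimately show "\<theta> \<in> ?points" by blast
qed

lemma admissible_q_principal_root:
  assumes "q \<in> admissible_q"
  obtains t m :: int where "4 * m - t\<^sup>2 = int q" and "z_q q = upper_root 1 (- t) m"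
proof -
  define t :: int where "t = (if q \<in> {4, 8} then 0 else 1)"
  define m where "m = (int q + t\<^sup>2) div 4"
  have q: "4 * m - t\<^sup>2 = int q" using assms unfolding admissible_q_def t_def m_def by auto
  then have "sqrt (4 * of_int m - (of_int t)\<^sup>2) = sqrt (real q)"
    by (metis of_int_diff of_int_mult of_int_numeral of_int_of_nat_eq of_int_power)
  then have "z_q q = upper_root 1 (- t) m"
    unfolding z_q_def upper_root_def mu_q_def lambda_q_def t_def by simp
  with q show ?thesis by (rule that)
qed

text \<open>A reduced form satisfies 3 A^2 \<le> q \<le> 163, leaving finitely many candidates.\<close>

lemma admissible_q_no_reduced_form:
  fixes A B C :: int
  assumes "q \<in> admissible_q" and "2 \<le> A" "\<bar>B\<bar> \<le> A" "A \<le> C" "B\<^sup>2 - 4 * A * C = - int q"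
  shows False
proof -
  define b where "b = \<bar>B\<bar>"
  have q: "int q \<in> {3, 4, 7, 8, 11, 19, 43, 67, 163}" using assms(1) unfolding admissible_q_def by auto
  have sum: "b\<^sup>2 + int q = 4 * A * C" using assms(5) unfolding b_def by simp
  have "b\<^sup>2 \<le> A\<^sup>2" unfolding b_def by (rule power_mono[OF assms(3) abs_ge_zero])
  moreover have "A\<^sup>2 \<le> A * C" using assms(2,4) by (simp add: power2_eq_square)
  ultimately have bound: "3 * A\<^sup>2 \<le> int q" and reduced: "4 * A\<^sup>2 \<le> b\<^sup>2 + int q" using sum by linarith+
  have "A \<le> 7"
  proof (rule ccontr)
    assume "\<not> A \<le> 7"
    then have "8 * 8 \<le> A * A" using mult_mono[of 8 A 8 A] by simp
    then show False using bound q by (auto simp: power2_eq_square)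
  qed
  then have A: "A \<in> {2, 3, 4, 5, 6, 7}" and b: "b \<in> {0, 1, 2, 3, 4, 5, 6, 7}"
    using assms(2,3) unfolding b_def by auto
  have check: "\<forall>q \<in> {3, 4, 7, 8, 11, 19, 43, 67, 163 :: int}. \<forall>A \<in> {2, 3, 4, 5, 6, 7 :: int}.
      \<forall>b \<in> {0, 1, 2, 3, 4, 5, 6, 7 :: int}. b \<le> A \<longrightarrow> 3 * A\<^sup>2 \<le> q \<longrightarrow>
      (b\<^sup>2 + q) mod (4 * A) = 0 \<longrightarrow> 4 * A\<^sup>2 \<le> b\<^sup>2 + q \<longrightarrow> False"
    by simp
  have "b \<le> A \<longrightarrow> 3 * A\<^sup>2 \<le> int q \<longrightarrow>
      (b\<^sup>2 + int q) mod (4 * A) = 0 \<longrightarrow> 4 * A\<^sup>2 \<le> b\<^sup>2 + int q \<longrightarrow> False"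
    using bspec[OF bspec[OF bspec[OF check q] A] b] .
  moreover have "(b\<^sup>2 + int q) mod (4 * A) = 0" unfolding sum by simp
  ultimately show False using assms(3) bound reduced unfolding b_def by blast
qed

lemma N_set_pos:
  assumes "q > 0" "n \<in> N_set q"
  shows "n > 0"
proof -
  obtain a b c d where det: "a * d - b * c = 1" and n: "n = R_fun q (moebius a b c d)"
    using assms(2) unfolding N_set_def Gamma_def by blast
  have z: "Im (z_q q) > 0" using assms(1) by (simp add: z_q_def lambda_q_def)
  have "Im (moebius a b c d (z_q q)) > 0" using Im_moebius_pos[OF z det] .
  then have "cosh_rho (z_q q) (moebius a b c d (z_q q)) > 0"
    using z unfolding cosh_rho_def by (simp add: add_pos_nonneg)
  then show ?thesis unfolding n R_fun_def using z by (simp add: z_q_def)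
qed

theorem proposition1p2:
  fixes q :: nat and n :: real
  assumes "q \<in> admissible_q"
    and "n \<in> N_set q"
  shows "{theta_angle (z_q q) (\<gamma> (z_q q)) | \<gamma>. \<gamma> \<in> Gamma_n q n \<and> \<gamma> (z_q q) \<noteq> z_q q}
       = {Arg (Complex x y) | x y :: real.
            Complex x y \<noteq> 0 \<and>
            Complex y x \<in> O_K q \<and>
            normK (Complex y x) = n\<^sup>2 - 4 * (lambda_q q) ^ 4 \<and>
            (\<exists>k :: int. 2 * y - 2 * n = real q * of_int k)}"
proof -
  obtain t m :: int where q: "4 * m - t\<^sup>2 = int q" and z: "z_q q = upper_root 1 (- t) m"
    using admissible_q_principal_root[OF assms(1)] by blast
  have "q > 0" using assms(1) by (auto simp: admissible_q_def)
  then have disc0: "t\<^sup>2 < 4 * m" using q by simp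
  have class_one: "False" if "2 \<le> A" "\<bar>B\<bar> \<le> A" "A \<le> C" "B\<^sup>2 - 4 * A * C = t\<^sup>2 - 4 * m" for A B C :: int
    using admissible_q_no_reduced_form[OF assms(1) that(1-3)] that(4) q by simp
  have lambda: "lambda_q q = Im (z_q q)" by (simp add: z_q_def)
  have real_q: "real q = of_int (4 * m - t\<^sup>2)" using q by simp
  have "{theta_angle (z_q q) (\<gamma> (z_q q)) | \<gamma>. \<gamma> \<in> Gamma_n q n \<and> \<gamma> (z_q q) \<noteq> z_q q}
      = {theta_angle (z_q q) (\<gamma> (z_q q)) | \<gamma>. \<gamma> \<in> Gamma \<and> 2 * (Im (z_q q))\<^sup>2 * cosh_rho (z_q q) (\<gamma> (z_q q)) = n
           \<and> \<gamma> (z_q q) \<noteq> z_q q}"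
    unfolding Gamma_n_def R_fun_def lambda by blast
  also have "\<dots> = {Arg (\<i> * form_eval (of_int A) (of_int B) (of_int C) (z_q q)) | A B C :: int.
            A > 0 \<and> B\<^sup>2 - 4 * A * C = t\<^sup>2 - 4 * m \<and> form_R (of_int A) (of_int B) (of_int C) (z_q q) = n
            \<and> form_eval (of_int A) (of_int B) (of_int C) (z_q q) \<noteq> 0}"
    unfolding z by (rule angles_of_Gamma_orbit[OF disc0 class_one])
  also have "\<dots> = {Arg (Complex x y) | x y :: real.
            Complex x y \<noteq> 0 \<and> Complex y x \<in> O_K q \<and> normK (Complex y x) = n\<^sup>2 - 4 * (lambda_q q) ^ 4 \<and>
            (\<exists>k :: int. 2 * y - 2 * n = real q * of_int k)}"
    unfolding O_K_def normK_def lambda real_q z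
    by (rule angles_of_lattice_points[OF disc0 N_set_pos[OF \<open>q > 0\<close> assms(2)], symmetric])
  finally show ?thesis .
qed

end
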